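(* Let $G$ be an undirected graph on vertex set $[m]$ with symmetric adjacency matrix $\mathcal{A}\in\{0,1\}^{m\times m}$, each vertex $i$ carrying an attribute vector $a_i\in\mathcal{U}=[k_1]\times\cdots\times[k_C]$. Let $W\in\mathbb{R}^{r\times K}$ with $K=\sum_{j=1}^C k_j$, $W_v\in\mathbb{R}^{r'\times r}$, $W_g\in\mathbb{R}^{r'\times r'}$, let $\sigma(z)=\max\{\alpha z,z\}$ (applied entrywise) for some fixed $\alpha\in[0,1]$, and let $S:\mathbb{R}^r\times\mathbb{R}^r\to\mathbb{R}$ be any function. Set $f_i=W(a_i)$, $F=[f_1,\dots,f_m]\in\mathbb{R}^{r\times m}$, $\mathbf{S}_{ji}=S(f_j,f_i)$, $F_{(1)}=\sigma(W_vF)$, and for $n\ge2$, $F_{(n)}=\big(F_{(n-1)}(\mathcal{A}\odot\mathbf{S})\big)\odot F_{(1)}$; let $f_{(n)}=\sigma(W_gF_{(n)})\mathbf{1}$ with $\mathbf{1}\in\mathbb{R}^m$ the all-ones vector. Then for every $n\ge1$ and every vertex $i\in[m]$, the vector $\tilde F^i_{(n)}:=W_g[F_{(n)}]_i$ (where $[\cdot]_i$ denotes the $i$-th column) satisfies $$\tilde F^i_{(n)}=W_g\,(W_vW)^{\{n\}}\,\Lambda_{(n)}\,c^i_{(n)}(G).$$ Consequently, for every $T\ge1$, $$f_{[T]}=\sum_{i=1}^m\sigma\big(\mathcal{M}\Lambda c^i_{[T]}(G)\big),$$ where $f_{[T]}=[f_{(1)};\dots;f_{(T)}]$, $c^i_{[T]}=[c^i_{(1)};\dots;c^i_{(T)}]$,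 $\mathcal{M}$ is block-diagonal with diagonal blocks $W_g(W_vW)^{\{1\}},\dots,W_g(W_vW)^{\{T\}}$, and $\Lambda$ is block-diagonal with blocks $\Lambda_{(1)},\dots,\Lambda_{(T)}$.
   Context: For an attribute vector $u=(u^1,\dots,u^C)\in\mathcal{U}$, let $h(u)\in\{0,1\}^K$ be the concatenation of the one-hot encodings of $u^1\in[k_1],\dots,u^C\in[k_C]$, and $W(u)=Wh(u)$. Let $K_C=\prod_{j=1}^Ck_j=|\mathcal{U}|$. A walk of length $n$ is a sequence of vertices $(p_1,\dots,p_n)$ with $\mathcal{A}_{p_k,p_{k+1}}=1$ for all $k<n$; it starts at $p_1$; its walk type is $(a_{p_1},\dots,a_{p_n})\in\mathcal{U}^n$. The vertex walk statistics $c^i_{(n)}(G)\in\mathbb{R}^{K_C^n}$ has entries indexed by walk types $v\in\mathcal{U}^n$, the entry at $v$ being the number of walks of length $n$ starting at vertex $i$ with type $v$. The walk weight of $v=(v_1,\dots,v_n)$ is $\lambda(v)=\prod_{k=1}^{n-1}S\big(W(v_{k+1}),W(v_k)\big)$ (equal to $1$ if $n=1$), and $\Lambda_{(n)}$ is the $K_C^n\times K_C^n$ diagonal matrix with entry $\lambda(v)$ at index $v$. For $z\in\mathbb{R}^{r'}$, $\Gamma(z)$ is the diagonal matrix with $[\Gamma(z)]_{ii}=\alpha\,\mathbb{I}[z_i<0]+\mathbb{I}[z_i\ge0]$. $(W_vW)^{\{n\}}$ is the $r'\times K_C^n$ matrix whose column indexed by $v=(v_1,\dots,v_n)$ is $g(v_1)\odot\cdots\odot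 g(v_n)$ with $g(u)=\Gamma(W_vW(u))\,W_vW(u)$. $\odot$ is the entrywise product; index orderings of $c^i_{(n)}$, $\Lambda_{(n)}$ and columns of $(W_vW)^{\{n\}}$ agree. *)

theory Defs
  imports Complex_Main
begin

(* Conventions: vertices are 0..<m; [k_j] is rendered 0-based as {0..<k_j};
   vectors and matrices are functions on nat indices, only entries inside the
   stated dimensions matter. Attribute vectors are lists of length C = length k. *)

definition leaky :: "real \<Rightarrow> real \<Rightarrow> real" where
  "leaky \<alpha> z = max (\<alpha> * z) z"

definition attrs :: "nat list \<Rightarrow> nat list set" where
  "attrs k = {u. length u = length k \<and> (\<forall>j<length k. u ! j < k ! j)}"

definition offs :: "nat list \<Rightarrow> nat \<Rightarrow> nat" where
  "offs k j = sum_list (take j k)"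

text \<open>h(u): concatenation of one-hot encodings, a vector of length K = sum_list k.\<close>
definition onehot :: "nat list \<Rightarrow> nat list \<Rightarrow> nat \<Rightarrow> real" where
  "onehot k u t = (if \<exists>j<length k. t = offs k j + u ! j then 1 else 0)"

definition Wemb :: "nat \<Rightarrow> nat list \<Rightarrow> (nat \<Rightarrow> nat \<Rightarrow> real) \<Rightarrow> nat list \<Rightarrow> nat \<Rightarrow> real" where
  "Wemb r k W u = (\<lambda>s. if s < r then (\<Sum>t<sum_list k. W s t * onehot k u t) else 0)"

definition walk_types :: "nat list \<Rightarrow> nat \<Rightarrow> nat list list set" where
  "walk_types k n = {vs. length vs = n \<and> set vs \<subseteq> attrs k}"

definition is_walk :: "(nat \<Rightarrow> nat \<Rightarrow> real) \<Rightarrow> nat list \<Rightarrow> bool" where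
  "is_walk A ps = (\<forall>t. Suc t < length ps \<longrightarrow> A (ps ! t) (ps ! Suc t) = 1)"

text \<open>Entry of c^i_(n)(G) at walk type v (n = length v).\<close>
definition walk_count :: "nat \<Rightarrow> (nat \<Rightarrow> nat \<Rightarrow> real) \<Rightarrow> (nat \<Rightarrow> nat list) \<Rightarrow> nat \<Rightarrow> nat list list \<Rightarrow> nat" where
  "walk_count m A a i v = card {ps. length ps = length v \<and> ps \<noteq> [] \<and> hd ps = i \<and>
        set ps \<subseteq> {..<m} \<and> is_walk A ps \<and> map a ps = v}"

definition walk_weight :: "((nat \<Rightarrow> real) \<Rightarrow> (nat \<Rightarrow> real) \<Rightarrow> real) \<Rightarrow> (nat list \<Rightarrow> nat \<Rightarrow> real)
      \<Rightarrow> nat list list \<Rightarrow> real" where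
  "walk_weight S Wu v = (\<Prod>t<length v - 1. S (Wu (v ! Suc t)) (Wu (v ! t)))"

definition Gam :: "real \<Rightarrow> real \<Rightarrow> real" where
  "Gam \<alpha> z = \<alpha> * (if z < 0 then 1 else 0) + (if z \<ge> 0 then 1 else 0)"

definition WvWu :: "nat \<Rightarrow> nat list \<Rightarrow> (nat \<Rightarrow> nat \<Rightarrow> real) \<Rightarrow> (nat \<Rightarrow> nat \<Rightarrow> real) \<Rightarrow> nat list \<Rightarrow> nat \<Rightarrow> real" where
  "WvWu r k W Wv u = (\<lambda>q. \<Sum>s<r. Wv q s * Wemb r k W u s)"

definition gvec :: "real \<Rightarrow> nat \<Rightarrow> nat list \<Rightarrow> (nat \<Rightarrow> nat \<Rightarrow> real) \<Rightarrow> (nat \<Rightarrow> nat \<Rightarrow> real) \<Rightarrow> nat list \<Rightarrow> nat \<Rightarrow> real" where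
  "gvec \<alpha> r k W Wv u = (\<lambda>q. Gam \<alpha> (WvWu r k W Wv u q) * WvWu r k W Wv u q)"

text \<open>Entry (q, v) of (W_v W)^{n}: column v is g(v_1) \<odot> ... \<odot> g(v_n).\<close>
definition WvW_pow :: "real \<Rightarrow> nat \<Rightarrow> nat list \<Rightarrow> (nat \<Rightarrow> nat \<Rightarrow> real) \<Rightarrow> (nat \<Rightarrow> nat \<Rightarrow> real)
      \<Rightarrow> nat list list \<Rightarrow> nat \<Rightarrow> real" where
  "WvW_pow \<alpha> r k W Wv v q = (\<Prod>t<length v. gvec \<alpha> r k W Wv (v ! t) q)"

fun featmat :: "nat \<Rightarrow> (nat \<Rightarrow> nat \<Rightarrow> real) \<Rightarrow> (nat \<Rightarrow> nat \<Rightarrow> real) \<Rightarrow> nat \<Rightarrow> nat \<Rightarrow> nat \<Rightarrow> real" where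
  "featmat m F1 B 0 = (\<lambda>q i. 0)"
| "featmat m F1 B (Suc 0) = F1"
| "featmat m F1 B (Suc (Suc n)) =
     (\<lambda>q i. (\<Sum>j<m. featmat m F1 B (Suc n) q j * B j i) * F1 q i)"

definition mv :: "'c set \<Rightarrow> ('r \<Rightarrow> 'c \<Rightarrow> real) \<Rightarrow> ('c \<Rightarrow> real) \<Rightarrow> 'r \<Rightarrow> real" where
  "mv I M x = (\<lambda>rr. \<Sum>c\<in>I. M rr c * x c)"

text \<open>Stacked row indices (n,p), n = 1..T, p < r'; stacked column indices (n,v), v \<in> U^n.\<close>
definition rowIdx :: "nat \<Rightarrow> nat \<Rightarrow> (nat \<times> nat) set" where
  "rowIdx r' T = {(n, p). 1 \<le> n \<and> n \<le> T \<and> p < r'}"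

definition colIdx :: "nat list \<Rightarrow> nat \<Rightarrow> (nat \<times> nat list list) set" where
  "colIdx k T = {(n, v). 1 \<le> n \<and> n \<le> T \<and> v \<in> walk_types k n}"

definition F1mat :: "real \<Rightarrow> nat \<Rightarrow> nat list \<Rightarrow> (nat \<Rightarrow> nat \<Rightarrow> real) \<Rightarrow> (nat \<Rightarrow> nat \<Rightarrow> real)
      \<Rightarrow> (nat \<Rightarrow> nat list) \<Rightarrow> nat \<Rightarrow> nat \<Rightarrow> real" where
  "F1mat \<alpha> r k W Wv a = (\<lambda>q i. leaky \<alpha> (\<Sum>s<r. Wv q s * Wemb r k W (a i) s))"

definition Fmat :: "nat \<Rightarrow> real \<Rightarrow> nat \<Rightarrow> nat list \<Rightarrow> (nat \<Rightarrow> nat \<Rightarrow> real) \<Rightarrow> (nat \<Rightarrow> nat \<Rightarrow> real)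
      \<Rightarrow> (nat \<Rightarrow> nat list) \<Rightarrow> (nat \<Rightarrow> nat \<Rightarrow> real) \<Rightarrow> ((nat \<Rightarrow> real) \<Rightarrow> (nat \<Rightarrow> real) \<Rightarrow> real)
      \<Rightarrow> nat \<Rightarrow> nat \<Rightarrow> nat \<Rightarrow> real" where
  "Fmat m \<alpha> r k W Wv a A S = featmat m (F1mat \<alpha> r k W Wv a)
      (\<lambda>j i. A j i * S (Wemb r k W (a j)) (Wemb r k W (a i)))"

definition Mblk :: "real \<Rightarrow> nat \<Rightarrow> nat \<Rightarrow> nat list \<Rightarrow> (nat \<Rightarrow> nat \<Rightarrow> real) \<Rightarrow> (nat \<Rightarrow> nat \<Rightarrow> real)
      \<Rightarrow> (nat \<Rightarrow> nat \<Rightarrow> real) \<Rightarrow> nat \<times> nat \<Rightarrow> nat \<times> nat list list \<Rightarrow> real" where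
  "Mblk \<alpha> r r' k W Wv Wg x y = (if fst x = fst y
      then (\<Sum>q<r'. Wg (snd x) q * WvW_pow \<alpha> r k W Wv (snd y) q) else 0)"

definition Lblk :: "(nat \<times> nat list list \<Rightarrow> real) \<Rightarrow> nat \<times> nat list list \<Rightarrow> nat \<times> nat list list \<Rightarrow> real" where
  "Lblk lam x y = (if x = y then lam x else 0)"

end

theory Submission
  imports Defs
begin

text \<open>
  Unfolding the recursion F(n) = (F(n-1) (A \<odot> S)) \<odot> F(1) writes entry (q, i) of F(n) as a
  sum over all vertex sequences i = p1, ..., pn of the product of the entries F(1) q pt times
  the product of the edge factors A pt p(t+1) S p(t+1) pt. As A is a symmetric 0/1 matrix, the
  adjacency factors vanish unless the sequence is a walk, where they are 1. As the leaky ReLU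
  satisfies leaky z = Gam z * z, the vertex factors, like the similarity factors, depend on the
  walk only through its type. Grouping the walks by type gives (W_v W)^{n} \<Lambda>(n) c^i(n);
  the stacked identity is the same computation read block by block.
\<close>

abbreviation vertex_lists :: "nat \<Rightarrow> nat \<Rightarrow> nat list set" where
  "vertex_lists m n \<equiv> {ps. set ps \<subseteq> {..<m} \<and> length ps = n}"

lemma sum_vertex_lists_Suc:
  "(\<Sum>ps\<in>vertex_lists m (Suc n). f ps) = (\<Sum>j<m. \<Sum>ps\<in>vertex_lists m n. f (j # ps))"
proof -
  have "inj_on (\<lambda>(ps, j). j # ps) (vertex_lists m n \<times> {..<m})"
    by (auto simp: inj_on_def)
  then have "(\<Sum>ps\<in>vertex_lists m (Suc n). f ps) = (\<Sum>(ps, j)\<in>vertex_lists m n \<times> {..<m}. f (j # ps))"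
    unfolding lists_length_Suc_eq by (simp add: sum.reindex case_prod_unfold)
  also have "\<dots> = (\<Sum>j<m. \<Sum>ps\<in>vertex_lists m n. f (j # ps))"
    by (simp add: sum.cartesian_product[symmetric] sum.swap[of _ "vertex_lists m n"])
  finally show ?thesis .
qed

definition path_weight :: "('a \<Rightarrow> 'a \<Rightarrow> real) \<Rightarrow> 'a list \<Rightarrow> real" where
  "path_weight B ps = (\<Prod>t<length ps - 1. B (ps ! Suc t) (ps ! t))"

lemma path_weight_Cons_Cons: "path_weight B (i # j # ps) = B j i * path_weight B (j # ps)"
  unfolding path_weight_def by (simp add: prod.lessThan_Suc_shift del: prod.lessThan_Suc)

lemma path_weight_mult:
  "path_weight (\<lambda>x y. B x y * C x y) ps = path_weight B ps * path_weight C ps"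
  unfolding path_weight_def by (rule prod.distrib)

lemma path_weight_map: "path_weight B (map a ps) = path_weight (\<lambda>x y. B (a x) (a y)) ps"
  unfolding path_weight_def by (intro prod.cong) auto

lemma walk_weight_eq_path_weight: "walk_weight S Wu v = path_weight (\<lambda>x y. S (Wu x) (Wu y)) v"
  unfolding walk_weight_def path_weight_def ..

lemma path_weight_adjacency:
  assumes A_01: "\<forall>i<m. \<forall>j<m. A i j = 0 \<or> A i j = 1"
    and A_sym: "\<forall>i<m. \<forall>j<m. A i j = A j i"
    and ps: "set ps \<subseteq> {..<m}"
  shows "path_weight A ps = (if is_walk A ps then 1 else 0)"
proof -
  have A_entry: "A (ps ! Suc t) (ps ! t) = A (ps ! t) (ps ! Suc t)"
    "A (ps ! t) (ps ! Suc t) = 0 \<or> A (ps ! t) (ps ! Suc t) = 1" if "Suc t < length ps" for t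
  proof -
    have "ps ! t < m" "ps ! Suc t < m"
      using that ps by (meson Suc_lessD lessThan_iff nth_mem subsetD)+
    then show "A (ps ! Suc t) (ps ! t) = A (ps ! t) (ps ! Suc t)"
      "A (ps ! t) (ps ! Suc t) = 0 \<or> A (ps ! t) (ps ! Suc t) = 1"
      using A_sym A_01 by auto
  qed
  show ?thesis
  proof (cases "is_walk A ps")
    case True
    then show ?thesis
      unfolding path_weight_def is_walk_def by (auto simp: A_entry intro!: prod.neutral)
  next
    case False
    then obtain t where t: "Suc t < length ps" "A (ps ! t) (ps ! Suc t) \<noteq> 1"
      unfolding is_walk_def by auto
    then have "A (ps ! Suc t) (ps ! t) = 0" using A_entry by metis
    moreover have "t \<in> {..<length ps - 1}" using t by auto
    ultimately show ?thesis using False unfolding path_weight_def by (auto intro: prod_zero)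
  qed
qed

lemma featmat_eq_sum_paths:
  "featmat m F1 B (Suc n) q i =
     (\<Sum>ps\<in>vertex_lists m n. (\<Prod>j\<leftarrow>i # ps. F1 q j) * path_weight B (i # ps))"
proof (induction n arbitrary: i)
  case 0
  have "vertex_lists m 0 = {[]}" by auto
  then show ?case by (simp add: path_weight_def)
next
  case (Suc n)
  have "featmat m F1 B (Suc (Suc n)) q i = (\<Sum>j<m. featmat m F1 B (Suc n) q j * B j i * F1 q i)"
    by (simp add: sum_distrib_right)
  also have "\<dots> = (\<Sum>j<m. \<Sum>ps\<in>vertex_lists m n.
                    (\<Prod>x\<leftarrow>i # j # ps. F1 q x) * path_weight B (i # j # ps))"
    by (simp add: Suc.IH sum_distrib_left sum_distrib_right path_weight_Cons_Cons mult_ac)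
  also have "\<dots> = (\<Sum>ps\<in>vertex_lists m (Suc n). (\<Prod>x\<leftarrow>i # ps. F1 q x) * path_weight B (i # ps))"
    by (rule sum_vertex_lists_Suc[symmetric])
  finally show ?case .
qed

lemma finite_attrs: "finite (attrs k)"
proof (rule finite_subset)
  have "u ! j < sum_list k" if "u \<in> attrs k" "j < length k" for u j
    using that elem_le_sum_list[of j k] by (auto simp: attrs_def)
  then show "attrs k \<subseteq> {u. set u \<subseteq> {..<sum_list k} \<and> length u = length k}"
    by (auto simp: attrs_def in_set_conv_nth)
qed (simp add: finite_lists_length_eq)

lemma finite_walk_types: "finite (walk_types k n)"
  unfolding walk_types_def
  by (rule finite_subset[OF _ finite_lists_length_eq[OF finite_attrs, of k n]]) auto

lemma card_walks_of_type:
  assumes "v \<in> walk_types k (Suc n)" and "i < m"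
  shows "walk_count m A a i v =
           card {ps \<in> vertex_lists m n. is_walk A (i # ps) \<and> map a (i # ps) = v}"
proof -
  have "{ps. length ps = length v \<and> ps \<noteq> [] \<and> hd ps = i \<and> set ps \<subseteq> {..<m} \<and>
             is_walk A ps \<and> map a ps = v}
        = Cons i ` {ps \<in> vertex_lists m n. is_walk A (i # ps) \<and> map a (i # ps) = v}"
    using assms by (force simp: walk_types_def neq_Nil_conv)
  then show ?thesis unfolding walk_count_def by (simp add: card_image)
qed

lemma sum_walks_by_type:
  assumes attr: "\<forall>j<m. a j \<in> attrs k" and i: "i < m"
  shows "(\<Sum>ps\<in>{ps \<in> vertex_lists m n. is_walk A (i # ps)}. h (map a (i # ps))) =
         (\<Sum>v\<in>walk_types k (Suc n). h v * real (walk_count m A a i v))"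
proof -
  define walks where "walks = {ps \<in> vertex_lists m n. is_walk A (i # ps)}"
  have "(\<Sum>ps\<in>walks. h (map a (i # ps))) =
        (\<Sum>v\<in>walk_types k (Suc n). \<Sum>ps\<in>{ps \<in> walks. map a (i # ps) = v}. h (map a (i # ps)))"
  proof (rule sum.group[symmetric])
    show "(\<lambda>ps. map a (i # ps)) ` walks \<subseteq> walk_types k (Suc n)"
      using attr i by (force simp: walks_def walk_types_def)
    show "finite walks"
      unfolding walks_def by (rule finite_subset[OF _ finite_lists_length_eq[of "{..<m}" n]]) auto
  qed (rule finite_walk_types)
  also have "\<dots> = (\<Sum>v\<in>walk_types k (Suc n). h v * real (walk_count m A a i v))"
    by (intro sum.cong refl) (simp add: walks_def card_walks_of_type[OF _ i] conj_assoc)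
  finally show ?thesis unfolding walks_def .
qed

lemma leaky_eq_Gam_mult:
  assumes "\<alpha> \<le> 1"
  shows "leaky \<alpha> z = Gam \<alpha> z * z"
proof (cases "z < 0")
  case True
  then have "z \<le> \<alpha> * z" using assms mult_right_mono_neg[of \<alpha> 1 z] by simp
  then show ?thesis using True unfolding leaky_def Gam_def by simp
next
  case False
  then have "\<alpha> * z \<le> z" using assms mult_right_mono[of \<alpha> 1 z] by simp
  then show ?thesis using False unfolding leaky_def Gam_def by simp
qed

lemma F1mat_eq_gvec: "\<alpha> \<le> 1 \<Longrightarrow> F1mat \<alpha> r k W Wv a q j = gvec \<alpha> r k W Wv (a j) q"
  unfolding F1mat_def gvec_def WvWu_def by (simp add: leaky_eq_Gam_mult)

lemma WvW_pow_eq_prod_list: "WvW_pow \<alpha> r k W Wv v q = (\<Prod>u\<leftarrow>v. gvec \<alpha> r k W Wv u q)"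
  unfolding WvW_pow_def
  by (induction v) (simp_all add: prod.lessThan_Suc_shift del: prod.lessThan_Suc)

lemma Fmat_eq_walk_sum:
  assumes A_01: "\<forall>i<m. \<forall>j<m. A i j = 0 \<or> A i j = 1"
    and A_sym: "\<forall>i<m. \<forall>j<m. A i j = A j i"
    and attr: "\<forall>i<m. a i \<in> attrs k"
    and alpha: "\<alpha> \<le> 1" and i: "i < m" and n: "n \<ge> 1"
  shows "Fmat m \<alpha> r k W Wv a A S n q i =
           (\<Sum>v\<in>walk_types k n. WvW_pow \<alpha> r k W Wv v q * walk_weight S (Wemb r k W) v
                                  * real (walk_count m A a i v))"
proof -
  obtain n' where n': "n = Suc n'" using n by (cases n) auto
  define h where "h v = WvW_pow \<alpha> r k W Wv v q * walk_weight S (Wemb r k W) v" for v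
  have term_eq: "(\<Prod>j\<leftarrow>i # ps. F1mat \<alpha> r k W Wv a q j)
                   * path_weight (\<lambda>x y. A x y * S (Wemb r k W (a x)) (Wemb r k W (a y))) (i # ps)
                 = (if is_walk A (i # ps) then h (map a (i # ps)) else 0)"
    if ps: "ps \<in> vertex_lists m n'" for ps
  proof -
    have "(\<Prod>j\<leftarrow>i # ps. F1mat \<alpha> r k W Wv a q j) = WvW_pow \<alpha> r k W Wv (map a (i # ps)) q"
      unfolding WvW_pow_eq_prod_list F1mat_eq_gvec[OF alpha] by (simp add: comp_def)
    moreover have "set (i # ps) \<subseteq> {..<m}" using ps i by auto
    ultimately show ?thesis
      unfolding h_def walk_weight_eq_path_weight path_weight_map
      by (simp add: path_weight_mult path_weight_adjacency[OF A_01 A_sym])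
  qed
  have "Fmat m \<alpha> r k W Wv a A S n q i =
          (\<Sum>ps\<in>vertex_lists m n'. if is_walk A (i # ps) then h (map a (i # ps)) else 0)"
    unfolding Fmat_def n' featmat_eq_sum_paths by (intro sum.cong refl term_eq) simp
  also have "\<dots> = (\<Sum>ps\<in>{ps \<in> vertex_lists m n'. is_walk A (i # ps)}. h (map a (i # ps)))"
    by (rule sum.inter_filter[symmetric]) (simp add: finite_lists_length_eq)
  also have "\<dots> = (\<Sum>v\<in>walk_types k n. h v * real (walk_count m A a i v))"
    unfolding n' by (rule sum_walks_by_type[OF attr i])
  finally show ?thesis unfolding h_def .
qed

lemma mv_Lblk:
  assumes "finite I" and "x \<in> I"
  shows "mv I (Lblk lam) c x = lam x * c x"
proof -
  have "mv I (Lblk lam) c x = (\<Sum>y\<in>I. if x = y then lam x * c y else 0)"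
    unfolding mv_def Lblk_def by (intro sum.cong) auto
  then show ?thesis using assms by simp
qed

lemma colIdx_eq_Sigma: "colIdx k T = Sigma {1..T} (walk_types k)"
  unfolding colIdx_def by auto

lemma mv_Mblk_Lblk:
  assumes "(n, p) \<in> rowIdx r' T"
  shows "mv (colIdx k T) (Mblk \<alpha> r r' k W Wv Wg) (mv (colIdx k T) (Lblk lam) c) (n, p) =
           (\<Sum>q<r'. Wg p q * (\<Sum>v\<in>walk_types k n. WvW_pow \<alpha> r k W Wv v q * lam (n, v) * c (n, v)))"
proof -
  define block where "block v = (\<Sum>q<r'. Wg p q * WvW_pow \<alpha> r k W Wv v q)" for v
  have fin: "finite (colIdx k T)"
    unfolding colIdx_eq_Sigma by (simp add: finite_walk_types)
  have n: "n \<in> {1..T}" using assms by (auto simp: rowIdx_def)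
  have "mv (colIdx k T) (Mblk \<alpha> r r' k W Wv Wg) (mv (colIdx k T) (Lblk lam) c) (n, p) =
          (\<Sum>x\<in>colIdx k T. if fst x = n then block (snd x) * (lam x * c x) else 0)"
    unfolding mv_def[of _ "Mblk _ _ _ _ _ _ _"] Mblk_def block_def
    by (intro sum.cong refl) (simp add: mv_Lblk[OF fin])
  also have "\<dots> = (\<Sum>x\<in>Pair n ` walk_types k n. block (snd x) * (lam x * c x))"
    unfolding sum.inter_filter[OF fin, symmetric]
    by (rule sum.cong) (use n in \<open>auto simp: colIdx_eq_Sigma\<close>)
  also have "\<dots> = (\<Sum>v\<in>walk_types k n. block v * (lam (n, v) * c (n, v)))"
    by (subst sum.reindex) (auto simp: inj_on_def)
  also have "\<dots> = (\<Sum>q<r'. Wg p q * (\<Sum>v\<in>walk_types k n. WvW_pow \<alpha> r k W Wv v q * lam (n, v) * c (n, v)))"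
    unfolding block_def sum_distrib_right sum_distrib_left
    by (subst sum.swap) (simp add: mult_ac)
  finally show ?thesis .
qed

theorem theorem4:
  fixes m r r' :: nat and k :: "nat list"
    and A :: "nat \<Rightarrow> nat \<Rightarrow> real" and a :: "nat \<Rightarrow> nat list"
    and W Wv Wg :: "nat \<Rightarrow> nat \<Rightarrow> real" and \<alpha> :: real
    and S :: "(nat \<Rightarrow> real) \<Rightarrow> (nat \<Rightarrow> real) \<Rightarrow> real"
  assumes k_pos: "\<forall>j<length k. 0 < k ! j"
    and A_01: "\<forall>i<m. \<forall>j<m. A i j = 0 \<or> A i j = 1"
    and A_sym: "\<forall>i<m. \<forall>j<m. A i j = A j i"
    and attr: "\<forall>i<m. a i \<in> attrs k"
    and alpha: "0 \<le> \<alpha>" "\<alpha> \<le> 1"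
  shows "(\<forall>n\<ge>1. \<forall>i<m. \<forall>p<r'.
            (\<Sum>q<r'. Wg p q * Fmat m \<alpha> r k W Wv a A S n q i) =
            (\<Sum>q<r'. Wg p q * (\<Sum>v\<in>walk_types k n.
                 WvW_pow \<alpha> r k W Wv v q * walk_weight S (Wemb r k W) v
                   * real (walk_count m A a i v))))
       \<and> (\<forall>T\<ge>1. \<forall>n p. (n, p) \<in> rowIdx r' T \<longrightarrow>
            (\<Sum>i<m. leaky \<alpha> (\<Sum>q<r'. Wg p q * Fmat m \<alpha> r k W Wv a A S n q i)) =
            (\<Sum>i<m. leaky \<alpha>
               (mv (colIdx k T) (Mblk \<alpha> r r' k W Wv Wg)
                  (mv (colIdx k T) (Lblk (\<lambda>x. walk_weight S (Wemb r k W) (snd x)))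
                     (\<lambda>x. real (walk_count m A a i (snd x)))) (n, p))))"
proof (intro conjI allI impI)
  note walk_sum = Fmat_eq_walk_sum[OF A_01 A_sym attr alpha(2)]
  show "(\<Sum>q<r'. Wg p q * Fmat m \<alpha> r k W Wv a A S n q i) =
          (\<Sum>q<r'. Wg p q * (\<Sum>v\<in>walk_types k n.
             WvW_pow \<alpha> r k W Wv v q * walk_weight S (Wemb r k W) v * real (walk_count m A a i v)))"
    if "n \<ge> 1" "i < m" for n i p
    using that by (simp add: walk_sum)
  show "(\<Sum>i<m. leaky \<alpha> (\<Sum>q<r'. Wg p q * Fmat m \<alpha> r k W Wv a A S n q i)) =
          (\<Sum>i<m. leaky \<alpha>
             (mv (colIdx k T) (Mblk \<alpha> r r' k W Wv Wg)
                (mv (colIdx k T) (Lblk (\<lambda>x. walk_weight S (Wemb r k W) (snd x)))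
                   (\<lambda>x. real (walk_count m A a i (snd x)))) (n, p)))"
    if "(n, p) \<in> rowIdx r' T" for T n p
  proof -
    have "n \<ge> 1" using that by (simp add: rowIdx_def)
    then show ?thesis using that by (simp add: walk_sum mv_Mblk_Lblk)
  qed
qed

end
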